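(* Let $A\in M_n(\mathcal F)$ be strongly nonsingular, i.e. $A^m$ is nonsingular for every $m\in\mathbb N$. Then $A$ has no nonzero degenerate generalized eigenvector: there is no nonzero tangible vector $v\in(\mathcal T\cup\{0_{\mathcal F}\})^n$ such that $A^mv\in(\mathcal G\cup\{0_{\mathcal F}\})^n$ for some $m\in\mathbb N$.
   Context: $\mathcal F=\mathcal T\cup\mathcal G\cup\{0_{\mathcal F}\}$ is the standard supertropical semifield: $\mathcal T$ is an ordered abelian group of tangible elements (written multiplicatively), $\mathcal G$ its ghost copy via $a\mapsto a^\nu$, $0_{\mathcal F}=-\infty$; $a+b$ is the element of larger $\nu$-value if these differ and $a+b=a^\nu$ if $a^\nu=b^\nu$; products multiply $\nu$-values and are tangible iff all factors are. $\det(A)=\sum_{\sigma\in S_n}\prod_ia_{i,\sigma(i)}$, and $A$ is nonsingular if $\det(A)\in\mathcal T$. A tangible vector $v$ is a degenerate generalized eigenvector of $A$ if $A^mv$ is ghost (all coordinates in $\mathcal G\cup\{0_{\mathcal F}\}$) for some $m$. *)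

theory Defs
  imports Main "HOL-Combinatorics.Permutations"
begin

text \<open>The standard supertropical semifield over an ordered abelian group of tangible
values. The group of tangible elements is written additively here (logarithmic
notation): Tan a * Tan b = Tan (a + b), the unit is Tan 0. Zero is 0_F = -infinity,
Gh a is the ghost copy a^nu of Tan a.\<close>

datatype 'a st = Zero | Tan 'a | Gh 'a

fun nuv :: "'a st \<Rightarrow> 'a" where
  "nuv (Tan a) = a"
| "nuv (Gh a) = a"
| "nuv Zero = undefined"

fun st_add :: "'a::linorder st \<Rightarrow> 'a st \<Rightarrow> 'a st" where
  "st_add Zero y = y"
| "st_add x Zero = x"
| "st_add x y = (if nuv x < nuv y then y else if nuv y < nuv x then x else Gh (nuv x))"

fun st_mult :: "'a::plus st \<Rightarrow> 'a st \<Rightarrow> 'a st" where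
  "st_mult Zero y = Zero"
| "st_mult x Zero = Zero"
| "st_mult (Tan a) (Tan b) = Tan (a + b)"
| "st_mult x y = Gh (nuv x + nuv y)"

instantiation st :: (linordered_ab_group_add) comm_monoid_add
begin
definition zero_st_def: "0 = Zero"
definition plus_st_def: "x + y = st_add x y"
instance
proof
  fix a b c :: "'a st"
  show "a + b + c = a + (b + c)"
    unfolding plus_st_def
    by (cases a; cases b; cases c) auto
  show "a + b = b + a"
    unfolding plus_st_def
    by (cases a; cases b) auto
  show "0 + a = a"
    unfolding plus_st_def zero_st_def by simp
qed
end

instantiation st :: (linordered_ab_group_add) comm_monoid_mult
begin
definition one_st_def: "1 = Tan 0"
definition times_st_def: "x * y = st_mult x y"
instance
proof
  fix a b c :: "'a st"
  show "a * b * c = a * (b * c)"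
    unfolding times_st_def
    by (cases a; cases b; cases c) (auto simp: add.assoc)
  show "a * b = b * a"
    unfolding times_st_def
    by (cases a; cases b) (auto simp: add.commute)
  show "1 * a = a"
    unfolding times_st_def one_st_def by (cases a) auto
qed
end

definition tangible :: "'a st \<Rightarrow> bool" where
  "tangible x \<longleftrightarrow> (\<exists>a. x = Tan a)"

definition ghost_or_zero :: "'a st \<Rightarrow> bool" where
  "ghost_or_zero x \<longleftrightarrow> x = Zero \<or> (\<exists>a. x = Gh a)"

type_synonym ('a, 'n) stmat = "'n \<Rightarrow> 'n \<Rightarrow> 'a st"
type_synonym ('a, 'n) stvec = "'n \<Rightarrow> 'a st"

definition st_det :: "('a::linordered_ab_group_add, 'n::finite) stmat \<Rightarrow> 'a st" where
  "st_det A = (\<Sum>\<sigma>\<in>{\<sigma>. \<sigma> permutes (UNIV :: 'n set)}. \<Prod>i\<in>UNIV. A i (\<sigma> i))"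

definition st_nonsingular :: "('a::linordered_ab_group_add, 'n::finite) stmat \<Rightarrow> bool" where
  "st_nonsingular A \<longleftrightarrow> tangible (st_det A)"

definition st_matmul :: "('a::linordered_ab_group_add, 'n::finite) stmat \<Rightarrow> ('a, 'n) stmat \<Rightarrow> ('a, 'n) stmat" where
  "st_matmul A B = (\<lambda>i j. \<Sum>k\<in>UNIV. A i k * B k j)"

definition st_id :: "('a::linordered_ab_group_add, 'n) stmat" where
  "st_id = (\<lambda>i j. if i = j then 1 else 0)"

fun st_matpow :: "('a::linordered_ab_group_add, 'n::finite) stmat \<Rightarrow> nat \<Rightarrow> ('a, 'n) stmat" where
  "st_matpow A 0 = st_id"
| "st_matpow A (Suc m) = st_matmul A (st_matpow A m)"

definition st_mulvec :: "('a::linordered_ab_group_add, 'n::finite) stmat \<Rightarrow> ('a, 'n) stvec \<Rightarrow> ('a, 'n) stvec" where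
  "st_mulvec A v = (\<lambda>i. \<Sum>k\<in>UNIV. A i k * v k)"

definition strongly_nonsingular :: "('a::linordered_ab_group_add, 'n::finite) stmat \<Rightarrow> bool" where
  "strongly_nonsingular A \<longleftrightarrow> (\<forall>m\<ge>1. st_nonsingular (st_matpow A m))"

definition tangible_vec :: "('a, 'n) stvec \<Rightarrow> bool" where
  "tangible_vec v \<longleftrightarrow> (\<forall>i. v i = Zero \<or> tangible (v i))"

definition ghost_vec :: "('a, 'n) stvec \<Rightarrow> bool" where
  "ghost_vec v \<longleftrightarrow> (\<forall>i. ghost_or_zero (v i))"

definition degenerate_gen_eigenvector :: "('a::linordered_ab_group_add, 'n::finite) stmat \<Rightarrow> ('a, 'n) stvec \<Rightarrow> bool" where
  "degenerate_gen_eigenvector A v \<longleftrightarrow> tangible_vec v \<and> (\<exists>m. ghost_vec (st_mulvec (st_matpow A m) v))"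

end

theory Submission
  imports Defs
begin

text \<open>Let \<open>B = A\<^sup>m\<close> be nonsingular: a unique permutation \<open>\<sigma>\<close> attains the maximal
\<open>\<nu>\<close>-value among the terms of \<open>det B\<close>, and its term is tangible. Suppose \<open>Bv\<close> is ghost for a
nonzero tangible \<open>v\<close>. For \<open>k\<close> in the support of \<open>v\<close>, the tangible term \<open>B(\<sigma>\<inverse>k, k) v(k)\<close>
of row \<open>\<sigma>\<inverse>k\<close> of \<open>Bv\<close> must be matched by a term \<open>B(\<sigma>\<inverse>k, f k) v(f k)\<close> with \<open>f k \<noteq> k\<close>
of at least the same \<open>\<nu>\<close>-value. The map \<open>f\<close> permutes some nonempty subset of the support;
composing \<open>\<sigma>\<close> with this permutation \<open>\<rho>\<close> gives a permutation other than \<open>\<sigma>\<close>, and summing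
the row inequalities (the values \<open>\<nu>(v k)\<close> cancel because \<open>\<rho>\<close> permutes them) shows that its
term is at least as large as that of \<open>\<sigma>\<close>, contradicting uniqueness.\<close>

definition st_below :: "'a::linorder st \<Rightarrow> 'a \<Rightarrow> bool" where
  "st_below x a \<longleftrightarrow> x = Zero \<or> nuv x < a"

lemma zero_st_eq_Zero [simp]: "(0::'a::linordered_ab_group_add st) = Zero"
  by (simp add: zero_st_def)

lemma st_add_eq_Zero_iff: "(x::'a::linordered_ab_group_add st) + y = Zero \<longleftrightarrow> x = Zero \<and> y = Zero"
  by (cases x; cases y) (auto simp: plus_st_def)

lemma st_add_nuv_ge: "(x::'a::linordered_ab_group_add st) \<noteq> Zero \<Longrightarrow> nuv x \<le> nuv (x + y)"
  by (cases x; cases y) (auto simp: plus_st_def)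

lemma st_add_below: "st_below x a \<Longrightarrow> st_below y a \<Longrightarrow> st_below ((x::'a::linordered_ab_group_add st) + y) a"
  by (cases x; cases y) (auto simp: plus_st_def st_below_def)

lemma st_mult_eq_Zero_iff: "(x::'a::linordered_ab_group_add st) * y = Zero \<longleftrightarrow> x = Zero \<or> y = Zero"
  by (cases x; cases y) (auto simp: times_st_def)

lemma st_mult_nonzero:
  assumes "(x::'a::linordered_ab_group_add st) \<noteq> Zero" "y \<noteq> Zero"
  shows "nuv (x * y) = nuv x + nuv y" "tangible (x * y) \<longleftrightarrow> tangible x \<and> tangible y"
  using assms by (cases x; cases y; auto simp: times_st_def tangible_def)+

lemma st_sum_eq_Zero_iff:
  "finite X \<Longrightarrow> sum g X = (Zero::'a::linordered_ab_group_add st) \<longleftrightarrow> (\<forall>x\<in>X. g x = Zero)"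
  by (induction X rule: finite_induct) (auto simp: st_add_eq_Zero_iff)

lemma st_sum_nuv_ge:
  assumes "finite X" "x \<in> X" "g x \<noteq> (Zero::'a::linordered_ab_group_add st)"
  shows "nuv (g x) \<le> nuv (sum g X)"
proof -
  have "sum g X = g x + sum g (X - {x})"
    using assms by (simp add: sum.remove)
  then show ?thesis
    using st_add_nuv_ge[OF assms(3)] by simp
qed

lemma st_sum_below:
  "finite X \<Longrightarrow> (\<And>x. x \<in> X \<Longrightarrow> st_below (g x) a) \<Longrightarrow> st_below (sum g X :: 'a::linordered_ab_group_add st) a"
proof (induction X rule: finite_induct)
  case empty
  then show ?case by (simp add: st_below_def)
next
  case (insert x X)
  then show ?case by (simp add: st_add_below)
qed

lemma st_sum_eq_Tan_iff:
  assumes "finite X"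
  shows "sum g X = (Tan a::'a::linordered_ab_group_add st) \<longleftrightarrow>
    (\<exists>x\<in>X. g x = Tan a \<and> (\<forall>y\<in>X - {x}. st_below (g y) a))"
  using assms
proof (induction X rule: finite_induct)
  case empty
  then show ?case by simp
next
  case (insert x X)
  have below_sum: "st_below (sum g X) a \<longleftrightarrow> (\<forall>y\<in>X. st_below (g y) a)"
    using insert.hyps(1) st_sum_below[of X g a] st_sum_nuv_ge[of X _ g]
    by (auto simp: st_below_def st_sum_eq_Zero_iff intro: le_less_trans)
  have "g x + sum g X = Tan a \<longleftrightarrow>
      (g x = Tan a \<and> st_below (sum g X) a) \<or> (sum g X = Tan a \<and> st_below (g x) a)"
    by (cases "g x"; cases "sum g X") (auto simp: plus_st_def st_below_def)
  moreover have "(\<exists>y\<in>insert x X. g y = Tan a \<and> (\<forall>z\<in>insert x X - {y}. st_below (g z) a)) \<longleftrightarrow>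
      (g x = Tan a \<and> (\<forall>z\<in>X. st_below (g z) a)) \<or>
      ((\<exists>y\<in>X. g y = Tan a \<and> (\<forall>z\<in>X - {y}. st_below (g z) a)) \<and> st_below (g x) a)"
    using insert.hyps(2) by (auto simp: insert_Diff_if)
  ultimately show ?case
    using insert.IH insert.hyps(1,2) below_sum by simp
qed

lemma st_sum_ghost_rival:
  assumes "finite X" "x \<in> X" "tangible (g x)" "ghost_or_zero (sum g X :: 'a::linordered_ab_group_add st)"
  shows "\<exists>y\<in>X - {x}. g y \<noteq> Zero \<and> nuv (g x) \<le> nuv (g y)"
proof (rule ccontr)
  assume "\<not> ?thesis"
  then have "\<forall>y\<in>X - {x}. st_below (g y) (nuv (g x))"
    by (auto simp: st_below_def not_le)
  then have "sum g X = Tan (nuv (g x))"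
    using assms(1-3) by (subst st_sum_eq_Tan_iff) (auto simp: tangible_def)
  then show False
    using assms(4) by (simp add: ghost_or_zero_def)
qed

lemma st_prod_eq_Zero: "finite I \<Longrightarrow> i \<in> I \<Longrightarrow> g i = (Zero::'a::linordered_ab_group_add st) \<Longrightarrow> prod g I = Zero"
  by (simp add: prod.remove st_mult_eq_Zero_iff)

lemma st_prod_nonzero:
  assumes "finite I" "\<And>i. i \<in> I \<Longrightarrow> g i \<noteq> (Zero::'a::linordered_ab_group_add st)"
  shows "prod g I \<noteq> Zero \<and> nuv (prod g I) = (\<Sum>i\<in>I. nuv (g i)) \<and>
    (tangible (prod g I) \<longleftrightarrow> (\<forall>i\<in>I. tangible (g i)))"
  using assms
proof (induction I rule: finite_induct)
  case empty
  then show ?case by (simp add: one_st_def tangible_def)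
next
  case (insert x I)
  then show ?case by (simp add: st_mult_eq_Zero_iff st_mult_nonzero)
qed

lemma nonsingular_dominant_permutation:
  fixes B :: "('a::linordered_ab_group_add, 'n::finite) stmat"
  assumes "st_nonsingular B"
  obtains \<sigma> d where "\<sigma> permutes UNIV" "\<And>i. tangible (B i (\<sigma> i))" "d = (\<Sum>i\<in>UNIV. nuv (B i (\<sigma> i)))"
    "\<And>\<tau>. \<tau> permutes UNIV \<Longrightarrow> \<tau> \<noteq> \<sigma> \<Longrightarrow> st_below (\<Prod>i\<in>UNIV. B i (\<tau> i)) d"
proof -
  obtain d where "st_det B = Tan d"
    using assms by (auto simp: st_nonsingular_def tangible_def)
  then have "\<exists>\<sigma>\<in>{\<sigma>. \<sigma> permutes UNIV}. (\<Prod>i\<in>UNIV. B i (\<sigma> i)) = Tan d \<and>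
      (\<forall>\<tau>\<in>{\<sigma>. \<sigma> permutes UNIV} - {\<sigma>}. st_below (\<Prod>i\<in>UNIV. B i (\<tau> i)) d)"
    unfolding st_det_def by (subst (asm) st_sum_eq_Tan_iff) (simp_all add: finite_permutations)
  then obtain \<sigma> where \<sigma>: "\<sigma> permutes UNIV" and weight: "(\<Prod>i\<in>UNIV. B i (\<sigma> i)) = Tan d"
    and dominant: "\<And>\<tau>. \<tau> permutes UNIV \<Longrightarrow> \<tau> \<noteq> \<sigma> \<Longrightarrow> st_below (\<Prod>i\<in>UNIV. B i (\<tau> i)) d"
    by blast
  have "B i (\<sigma> i) \<noteq> Zero" for i
    using st_prod_eq_Zero[of UNIV i "\<lambda>i. B i (\<sigma> i)"] weight by auto
  then have "d = (\<Sum>i\<in>UNIV. nuv (B i (\<sigma> i)))" "tangible (B i (\<sigma> i))" for i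
    using st_prod_nonzero[of UNIV "\<lambda>i. B i (\<sigma> i)"] weight by (auto simp: tangible_def)
  then show thesis
    using that[OF \<sigma> _ _ dominant] by blast
qed

lemma ghost_mulvec_rival_map:
  fixes B :: "('a::linordered_ab_group_add, 'n::finite) stmat"
  assumes "ghost_vec (st_mulvec B v)" "tangible_vec v" "\<And>k. tangible (B (r k) k)"
  obtains f where "\<And>k. v k \<noteq> Zero \<Longrightarrow> v (f k) \<noteq> Zero \<and> f k \<noteq> k \<and> B (r k) (f k) \<noteq> Zero \<and>
    nuv (B (r k) k) + nuv (v k) \<le> nuv (B (r k) (f k)) + nuv (v (f k))"
proof -
  have "\<exists>k'. v k' \<noteq> Zero \<and> k' \<noteq> k \<and> B (r k) k' \<noteq> Zero \<and>
      nuv (B (r k) k) + nuv (v k) \<le> nuv (B (r k) k') + nuv (v k')" if "v k \<noteq> Zero" for k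
  proof -
    have "tangible (v k)"
      using assms(2) that by (auto simp: tangible_vec_def)
    then have "tangible (B (r k) k * v k)"
      using assms(3)[of k] by (auto simp: tangible_def times_st_def)
    moreover have "ghost_or_zero (\<Sum>k'\<in>UNIV. B (r k) k' * v k')"
      using assms(1) by (simp add: ghost_vec_def st_mulvec_def)
    ultimately obtain k' where "k' \<noteq> k" "B (r k) k' * v k' \<noteq> Zero"
      "nuv (B (r k) k * v k) \<le> nuv (B (r k) k' * v k')"
      using st_sum_ghost_rival[of UNIV k "\<lambda>k'. B (r k) k' * v k'"] by auto
    moreover have "B (r k) k \<noteq> Zero"
      using assms(3)[of k] by (auto simp: tangible_def)
    ultimately show ?thesis
      using that by (auto simp: st_mult_eq_Zero_iff st_mult_nonzero)
  qed
  then show thesis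
    using that by metis
qed

text \<open>A minimal nonempty \<open>f\<close>-invariant subset is mapped onto itself.\<close>

lemma finite_selfmap_permutes_subset:
  assumes "finite S" "S \<noteq> {}" "f ` S \<subseteq> S"
  obtains C \<rho> where "C \<subseteq> S" "C \<noteq> {}" "\<rho> permutes C" "\<And>k. k \<in> C \<Longrightarrow> \<rho> k = f k"
proof -
  define invariant where "invariant C \<longleftrightarrow> C \<noteq> {} \<and> C \<subseteq> S \<and> f ` C \<subseteq> C" for C
  have "invariant S"
    using assms by (simp add: invariant_def)
  then obtain C where C: "invariant C" and minimal: "\<And>D. invariant D \<Longrightarrow> card C \<le> card D"
    using ex_has_least_nat[of invariant S card] by blast
  have finite: "finite C"
    using C assms(1) finite_subset unfolding invariant_def by blast
  have "invariant (f ` C)"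
    using C unfolding invariant_def by blast
  then have "card C \<le> card (f ` C)"
    by (rule minimal)
  with card_image_le[OF finite, of f] have card: "card (f ` C) = card C"
    by (rule antisym)
  then have "f ` C = C"
    using C finite card_subset_eq unfolding invariant_def by blast
  moreover have "inj_on f C"
    using eq_card_imp_inj_on[OF finite card] .
  ultimately have "bij_betw f C C"
    by (simp add: bij_betw_def)
  define \<rho> where "\<rho> k = (if k \<in> C then f k else k)" for k
  have "bij_betw \<rho> C C"
    using \<open>bij_betw f C C\<close> by (rule bij_betw_cong[THEN iffD1, rotated]) (simp add: \<rho>_def)
  then have "\<rho> permutes C"
    by (rule bij_imp_permutes) (simp add: \<rho>_def)
  moreover have "\<rho> k = f k" if "k \<in> C" for k
    using that by (simp add: \<rho>_def)
  ultimately show thesis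
    using C that unfolding invariant_def by blast
qed

lemma sum_le_sum_with_permuted_potential:
  fixes a b c :: "'i \<Rightarrow> 'a::ordered_ab_group_add"
  assumes "finite S" "p permutes S" "q permutes S" "\<And>k. k \<in> S \<Longrightarrow> a k + c (p k) \<le> b k + c (q k)"
  shows "sum a S \<le> sum b S"
proof -
  have "sum a S + sum (c \<circ> p) S \<le> sum b S + sum (c \<circ> q) S"
    using sum_mono[of S "\<lambda>k. a k + c (p k)" "\<lambda>k. b k + c (q k)"] assms(4)
    by (simp add: sum.distrib)
  moreover have "sum (c \<circ> p) S = sum (c \<circ> q) S"
    using sum.permute[OF assms(2), of c] sum.permute[OF assms(3), of c] by simp
  ultimately show ?thesis
    by simp
qed

lemma permutation_term_ge_by_potential:
  fixes B :: "('a::linordered_ab_group_add, 'n::finite) stmat"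
  assumes "\<sigma> permutes UNIV" "\<tau> permutes UNIV" "\<And>i. B i (\<tau> i) \<noteq> Zero"
    "\<And>i. nuv (B i (\<sigma> i)) + c (\<sigma> i) \<le> nuv (B i (\<tau> i)) + c (\<tau> i)"
  shows "(\<Prod>i\<in>UNIV. B i (\<tau> i)) \<noteq> Zero" "(\<Sum>i\<in>UNIV. nuv (B i (\<sigma> i))) \<le> nuv (\<Prod>i\<in>UNIV. B i (\<tau> i))"
proof -
  have weight: "(\<Prod>i\<in>UNIV. B i (\<tau> i)) \<noteq> Zero"
    "nuv (\<Prod>i\<in>UNIV. B i (\<tau> i)) = (\<Sum>i\<in>UNIV. nuv (B i (\<tau> i)))"
    using st_prod_nonzero[of UNIV "\<lambda>i. B i (\<tau> i)"] assms(3) by simp_all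
  then show "(\<Prod>i\<in>UNIV. B i (\<tau> i)) \<noteq> Zero"
    by blast
  show "(\<Sum>i\<in>UNIV. nuv (B i (\<sigma> i))) \<le> nuv (\<Prod>i\<in>UNIV. B i (\<tau> i))"
    unfolding weight(2) using finite assms(1,2,4) by (rule sum_le_sum_with_permuted_potential)
qed

lemma nonsingular_mulvec_not_ghost:
  fixes B :: "('a::linordered_ab_group_add, 'n::finite) stmat"
  assumes "st_nonsingular B" "v \<noteq> (\<lambda>i. Zero)" "tangible_vec v"
  shows "\<not> ghost_vec (st_mulvec B v)"
proof
  assume ghost: "ghost_vec (st_mulvec B v)"
  obtain \<sigma> d where \<sigma>: "\<sigma> permutes UNIV" and diag: "\<And>i. tangible (B i (\<sigma> i))"
    and d: "d = (\<Sum>i\<in>UNIV. nuv (B i (\<sigma> i)))"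
    and dominant: "\<And>\<tau>. \<tau> permutes UNIV \<Longrightarrow> \<tau> \<noteq> \<sigma> \<Longrightarrow> st_below (\<Prod>i\<in>UNIV. B i (\<tau> i)) d"
    using nonsingular_dominant_permutation[OF assms(1)] by blast
  define S where "S = {k. v k \<noteq> Zero}"
  define r where "r = inv \<sigma>"
  have \<sigma>_r [simp]: "\<sigma> (r k) = k" "r (\<sigma> i) = i" for k i
    using \<sigma> by (simp_all add: r_def permutes_inverses)
  obtain f where f: "\<And>k. k \<in> S \<Longrightarrow> f k \<in> S \<and> f k \<noteq> k \<and> B (r k) (f k) \<noteq> Zero \<and>
      nuv (B (r k) k) + nuv (v k) \<le> nuv (B (r k) (f k)) + nuv (v (f k))"
  proof (rule ghost_mulvec_rival_map[OF ghost assms(3)])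
    show "tangible (B (r k) k)" for k
      using diag[of "r k"] by simp
  qed (auto simp: S_def)
  have "S \<noteq> {}"
    using assms(2) by (auto simp: S_def)
  moreover have "f ` S \<subseteq> S"
    using f by blast
  ultimately obtain C \<rho> where CS: "C \<subseteq> S" and "C \<noteq> {}" and "\<rho> permutes C"
    and \<rho>_f: "\<And>k. k \<in> C \<Longrightarrow> \<rho> k = f k"
    using finite_selfmap_permutes_subset[of S f] finite by blast
  then obtain k0 where k0: "k0 \<in> C" by blast
  have \<rho>_id: "\<rho> k = k" if "k \<notin> C" for k
    using \<open>\<rho> permutes C\<close> that by (simp add: permutes_not_in)
  have \<rho>: "\<rho> permutes UNIV"
    using \<open>\<rho> permutes C\<close> by (rule permutes_subset) simp
  define \<tau> where "\<tau> = \<rho> \<circ> \<sigma>"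
  have \<tau>: "\<tau> permutes UNIV"
    unfolding \<tau>_def using \<sigma> \<rho> by (rule permutes_compose)
  have "\<tau> (r k0) \<noteq> \<sigma> (r k0)"
    using k0 CS f[of k0] \<rho>_f[of k0] by (auto simp: \<tau>_def)
  then have "st_below (\<Prod>i\<in>UNIV. B i (\<tau> i)) d"
    using dominant[OF \<tau>] by metis
  moreover have "B i (\<tau> i) \<noteq> Zero"
    "nuv (B i (\<sigma> i)) + nuv (v (\<sigma> i)) \<le> nuv (B i (\<tau> i)) + nuv (v (\<tau> i))" for i
    using f[of "\<sigma> i"] CS \<rho>_f[of "\<sigma> i"] \<rho>_id[of "\<sigma> i"] diag[of i]
    by (cases "\<sigma> i \<in> C"; auto simp: \<tau>_def tangible_def)+
  ultimately show False
    using permutation_term_ge_by_potential[OF \<sigma> \<tau>, of B "\<lambda>k. nuv (v k)"] d by (auto simp: st_below_def)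
qed

lemma st_id_mulvec [simp]: "st_mulvec st_id v = (v :: ('a::linordered_ab_group_add, 'n::finite) stvec)"
proof
  fix i
  have "st_mulvec st_id v i = (\<Sum>k\<in>UNIV. if i = k then v k else 0)"
    unfolding st_mulvec_def st_id_def by (intro sum.cong) (auto simp: st_mult_eq_Zero_iff)
  then show "st_mulvec st_id v i = v i"
    by simp
qed

lemma tangible_ghost_vec_eq_zero:
  assumes "tangible_vec v" "ghost_vec v"
  shows "v = (\<lambda>i. Zero)"
proof
  fix i
  have "v i = Zero \<or> tangible (v i)" "ghost_or_zero (v i)"
    using assms by (auto simp: tangible_vec_def ghost_vec_def)
  then show "v i = Zero"
    by (auto simp: tangible_def ghost_or_zero_def)
qed

theorem lemma3p13:
  fixes A :: "('a::linordered_ab_group_add, 'n::finite) stmat"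
  assumes "strongly_nonsingular A"
  shows "\<not> (\<exists>v :: ('a, 'n) stvec. v \<noteq> (\<lambda>i. Zero) \<and> tangible_vec v \<and>
           (\<exists>m. ghost_vec (st_mulvec (st_matpow A m) v)))"
proof
  assume "\<exists>v :: ('a, 'n) stvec. v \<noteq> (\<lambda>i. Zero) \<and> tangible_vec v \<and>
           (\<exists>m. ghost_vec (st_mulvec (st_matpow A m) v))"
  then obtain v m where v: "v \<noteq> (\<lambda>i. Zero)" "tangible_vec v"
    and ghost: "ghost_vec (st_mulvec (st_matpow A m) v)" by blast
  show False
  proof (cases m)
    case 0
    \<comment> \<open>strong nonsingularity only concerns \<open>m \<ge> 1\<close>; here \<open>v\<close> itself would be ghost\<close>
    then show False
      using ghost v tangible_ghost_vec_eq_zero by auto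
  next
    case (Suc k)
    then have "m \<ge> 1"
      by simp
    then have "st_nonsingular (st_matpow A m)"
      using assms unfolding strongly_nonsingular_def by blast
    then show False
      using nonsingular_mulvec_not_ghost v ghost by blast
  qed
qed

end
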